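(* Let $(\Delta x,\Delta y)\in\mathbb{R}^2$, $(o_x,o_y)\in\mathbb{R}^2$, $(x_0,y_0,\theta_0)\in\mathbb{R}^3$ and $t_{\max}>0$. Consider the straight robot path $x(t)=x_0+t\cos\theta_0$, $y(t)=y_0+t\sin\theta_0$, $\theta(t)=\theta_0$ for $t\in[0,t_{\max}]$, and let the anchoring point have world coordinates $\tilde x(t)=x(t)+\cos\theta(t)\Delta x-\sin\theta(t)\Delta y$, $\tilde y(t)=y(t)+\sin\theta(t)\Delta x+\cos\theta(t)\Delta y$. Assume $(\tilde x(t),\tilde y(t))\neq(o_x,o_y)$ for all $t$. Then the relative angle function $$\Phi(t)=\arctan\left(\frac{o_y-\tilde y(t)}{o_x-\tilde x(t)}\right)-\theta(t)$$ is monotonic on $(0,t_{\max})$.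
   Context: $(\Delta x,\Delta y)$ is the position of the tether–robot anchoring point $s$ in the robot's egocentric frame, and $(o_x,o_y)$ is the (fixed) position of the last tether–obstacle contact point $o$ in the world frame. In the relative angle function, $\arctan\left(\frac{o_y-\tilde y}{o_x-\tilde x}\right)$ denotes the direction angle of the vector from $(\tilde x,\tilde y)$ to $(o_x,o_y)$, taken as a continuous (differentiable) branch along the path, whose derivative is $\frac{-\tilde y'(o_x-\tilde x)+\tilde x'(o_y-\tilde y)}{(o_x-\tilde x)^2+(o_y-\tilde y)^2}$. *)

theory Defs
  imports "HOL-Analysis.Analysis"
begin

definition path_x :: "real \<Rightarrow> real \<Rightarrow> real \<Rightarrow> real" where
  "path_x x0 th0 t = x0 + t * cos th0"

definition path_y :: "real \<Rightarrow> real \<Rightarrow> real \<Rightarrow> real" where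
  "path_y y0 th0 t = y0 + t * sin th0"

definition anchor_x :: "real \<Rightarrow> real \<Rightarrow> real \<Rightarrow> real \<Rightarrow> real \<Rightarrow> real" where
  "anchor_x dx dy x0 th0 t = path_x x0 th0 t + cos th0 * dx - sin th0 * dy"

definition anchor_y :: "real \<Rightarrow> real \<Rightarrow> real \<Rightarrow> real \<Rightarrow> real \<Rightarrow> real" where
  "anchor_y dx dy y0 th0 t = path_y y0 th0 t + sin th0 * dx + cos th0 * dy"

end

theory Submission
  imports Defs
begin

text \<open>
  The vector p(t) from the anchoring point to the obstacle point moves along a straight line
  p(t) = p0 + t w. If \<phi> is a continuous polar angle of p, then
  |p(s)| |p(t)| sin (\<phi> t - \<phi> s) = p(s) \<times> p(t) = (t - s) (p0 \<times> w).
  If p0 \<times> w \<noteq> 0 the angle never takes the same value twice, so \<phi> is injective and,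
  being continuous on an interval, monotone. If p0 \<times> w = 0 all differences of values of
  \<phi> lie in \<pi>\<int>, a discrete set, so the continuous \<phi> is constant. The heading \<theta>
  is constant along the path, so \<phi> - \<theta> is monotone as well.
\<close>

lemma polar_cross_product:
  fixes r s \<alpha> \<beta> :: real
  shows "(r * cos \<alpha>) * (s * sin \<beta>) - (r * sin \<alpha>) * (s * cos \<beta>) = r * s * sin (\<beta> - \<alpha>)"
  by (simp add: sin_diff algebra_simps)

lemma constant_on_if_sin_diff_eq_0:
  fixes f :: "'a::topological_space \<Rightarrow> real"
  assumes "connected S" "continuous_on S f"
    and sin_diff: "\<And>x y. x \<in> S \<Longrightarrow> y \<in> S \<Longrightarrow> sin (f y - f x) = 0"
  shows "f constant_on S"
proof (rule continuous_discrete_range_constant[OF assms(1,2)])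
  fix x assume "x \<in> S"
  have "pi \<le> norm (f y - f x)" if "y \<in> S" "f y \<noteq> f x" for y
  proof -
    obtain i :: int where i: "f y - f x = of_int i * pi"
      using sin_diff[OF \<open>x \<in> S\<close> \<open>y \<in> S\<close>] by (auto simp: sin_zero_iff_int2)
    with \<open>f y \<noteq> f x\<close> have "i \<noteq> 0" by auto
    then have "1 \<le> \<bar>of_int i :: real\<bar>" by linarith
    then have "pi \<le> \<bar>of_int i\<bar> * pi" by simp
    then show ?thesis by (simp add: i abs_mult)
  qed
  then show "\<exists>e>0. \<forall>y. y \<in> S \<and> f y \<noteq> f x \<longrightarrow> e \<le> norm (f y - f x)"
    using pi_gt_zero by blast
qed

lemma polar_angle_along_line_monotone:
  fixes a b u v :: real and \<phi> :: "real \<Rightarrow> real" and S :: "real set"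
  assumes "is_interval S" "continuous_on S \<phi>"
    and avoids_origin: "\<And>t. t \<in> S \<Longrightarrow> (a + t * u, b + t * v) \<noteq> (0, 0)"
    and polar_cos: "\<And>t. t \<in> S \<Longrightarrow>
           a + t * u = sqrt ((a + t * u)\<^sup>2 + (b + t * v)\<^sup>2) * cos (\<phi> t)"
    and polar_sin: "\<And>t. t \<in> S \<Longrightarrow>
           b + t * v = sqrt ((a + t * u)\<^sup>2 + (b + t * v)\<^sup>2) * sin (\<phi> t)"
  shows "mono_on S \<phi> \<or> antimono_on S \<phi>"
proof -
  define r where "r t = sqrt ((a + t * u)\<^sup>2 + (b + t * v)\<^sup>2)" for t
  have r_pos: "r t > 0" if "t \<in> S" for t
    using avoids_origin[OF that] by (simp add: r_def sum_power2_gt_zero_iff)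
  have cross: "r s * r t * sin (\<phi> t - \<phi> s) = (t - s) * (a * v - b * u)"
    if "s \<in> S" "t \<in> S" for s t
  proof -
    have polar: "a + s * u = r s * cos (\<phi> s)" "b + s * v = r s * sin (\<phi> s)"
      "a + t * u = r t * cos (\<phi> t)" "b + t * v = r t * sin (\<phi> t)"
      unfolding r_def using polar_cos polar_sin that by blast+
    have "r s * r t * sin (\<phi> t - \<phi> s)
        = (r s * cos (\<phi> s)) * (r t * sin (\<phi> t)) - (r s * sin (\<phi> s)) * (r t * cos (\<phi> t))"
      by (rule polar_cross_product[symmetric])
    also have "\<dots> = (a + s * u) * (b + t * v) - (b + s * v) * (a + t * u)"
      by (simp only: polar)
    also have "\<dots> = (t - s) * (a * v - b * u)"
      by (simp add: algebra_simps)
    finally show ?thesis .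
  qed
  show ?thesis
  proof (cases "a * v - b * u = 0")
    case True
    have "\<phi> constant_on S"
    proof (rule constant_on_if_sin_diff_eq_0)
      show "connected S" using \<open>is_interval S\<close> by (simp add: is_interval_connected)
      show "sin (\<phi> t - \<phi> s) = 0" if "s \<in> S" "t \<in> S" for s t
        using cross[OF that] r_pos[OF that(1)] r_pos[OF that(2)] True by simp
    qed (fact \<open>continuous_on S \<phi>\<close>)
    then have "mono_on S \<phi>"
      by (auto simp: constant_on_def intro: mono_onI)
    then show ?thesis ..
  next
    case False
    have "inj_on \<phi> S"
    proof (rule inj_onI)
      fix s t assume "s \<in> S" "t \<in> S" "\<phi> s = \<phi> t"
      then show "s = t" using cross[of s t] False by simp
    qed
    then have "strict_mono_on S \<phi> \<or> strict_antimono_on S \<phi>"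
      using injective_eq_monotone_map[OF assms(1,2)] by blast
    then show ?thesis
      using strict_mono_iff_mono strict_antimono_iff_antimono by blast
  qed
qed

theorem theorem1:
  fixes dx dy ox oy x0 y0 th0 tmax :: real
    and phi :: "real \<Rightarrow> real"
  assumes tmax_pos: "tmax > 0"
    and nonzero: "\<And>t. t \<in> {0..tmax} \<Longrightarrow>
         (anchor_x dx dy x0 th0 t, anchor_y dx dy y0 th0 t) \<noteq> (ox, oy)"
    and phi_cont: "continuous_on {0<..<tmax} phi"
    and phi_cos: "\<And>t. t \<in> {0<..<tmax} \<Longrightarrow>
         ox - anchor_x dx dy x0 th0 t =
           sqrt ((ox - anchor_x dx dy x0 th0 t)\<^sup>2 + (oy - anchor_y dx dy y0 th0 t)\<^sup>2) * cos (phi t)"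
    and phi_sin: "\<And>t. t \<in> {0<..<tmax} \<Longrightarrow>
         oy - anchor_y dx dy y0 th0 t =
           sqrt ((ox - anchor_x dx dy x0 th0 t)\<^sup>2 + (oy - anchor_y dx dy y0 th0 t)\<^sup>2) * sin (phi t)"
  shows "(\<forall>s\<in>{0<..<tmax}. \<forall>t\<in>{0<..<tmax}. s \<le> t \<longrightarrow> phi s - th0 \<le> phi t - th0)
       \<or> (\<forall>s\<in>{0<..<tmax}. \<forall>t\<in>{0<..<tmax}. s \<le> t \<longrightarrow> phi s - th0 \<ge> phi t - th0)"
proof -
  define a where "a = ox - x0 - cos th0 * dx + sin th0 * dy"
  define b where "b = oy - y0 - sin th0 * dx - cos th0 * dy"
  have offset_x: "ox - anchor_x dx dy x0 th0 t = a + t * - cos th0" for t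
    by (simp add: a_def anchor_x_def path_x_def)
  have offset_y: "oy - anchor_y dx dy y0 th0 t = b + t * - sin th0" for t
    by (simp add: b_def anchor_y_def path_y_def)
  have "mono_on {0<..<tmax} phi \<or> antimono_on {0<..<tmax} phi"
  proof (rule polar_angle_along_line_monotone[OF is_interval_oo phi_cont])
    fix t :: real assume t: "t \<in> {0<..<tmax}"
    have "(ox - anchor_x dx dy x0 th0 t, oy - anchor_y dx dy y0 th0 t) \<noteq> (0, 0)"
      using nonzero[of t] t by auto
    then show "(a + t * - cos th0, b + t * - sin th0) \<noteq> (0, 0)"
      unfolding offset_x offset_y .
    show "a + t * - cos th0 =
        sqrt ((a + t * - cos th0)\<^sup>2 + (b + t * - sin th0)\<^sup>2) * cos (phi t)"
      using phi_cos[OF t] unfolding offset_x offset_y .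
    show "b + t * - sin th0 =
        sqrt ((a + t * - cos th0)\<^sup>2 + (b + t * - sin th0)\<^sup>2) * sin (phi t)"
      using phi_sin[OF t] unfolding offset_x offset_y .
  qed
  then show ?thesis
    by (auto simp: monotone_on_def)
qed

end
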